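(* Let $(V,e)$ be a unital $\ast$-normed space and $S_2=V_{he}^\ast\cap2\operatorname{ball}V^\ast$. Then $\operatorname{ball}V$ is equivalent to $S_2^\circ$, i.e. $rS_2^\circ\subseteq\operatorname{ball}V\subseteq RS_2^\circ$ for some $r,R>0$.
   Context: A $\ast$-normed space is a complex vector space with involution and norm satisfying $\|v^\ast\|=\|v\|$; $V^\ast$ has involution $\langle v,\varphi^\ast\rangle=\overline{\langle v^\ast,\varphi\rangle}$, $V_h^\ast$ is the set of hermitian bounded functionals, and for nonzero hermitian $e$, $V_{he}^\ast=\{y\in V_h^\ast:\langle e,y\rangle=1\}$. $(V,e)$ is a unital $\ast$-normed space if $V_{he}^\ast\cap\operatorname{ball}V^\ast\ne\varnothing$. For $A\subseteq V^\ast$, $A^\circ=\{v\in V:|\langle v,a\rangle|\le1\ \forall a\in A\}$. *)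

theory Defs
  imports "HOL-Analysis.Analysis"
begin

text \<open>A complex normed space is modelled as a real normed vector space together with a
complex scalar multiplication sm extending the real one.\<close>

definition complex_normed_space :: "(complex \<Rightarrow> 'a::real_normed_vector \<Rightarrow> 'a) \<Rightarrow> bool" where
  "complex_normed_space sm \<longleftrightarrow>
     (\<forall>r v. sm (complex_of_real r) v = r *\<^sub>R v) \<and>
     (\<forall>c x y. sm c (x + y) = sm c x + sm c y) \<and>
     (\<forall>c d v. sm (c + d) v = sm c v + sm d v) \<and>
     (\<forall>c d v. sm c (sm d v) = sm (c * d) v) \<and>
     (\<forall>c v. norm (sm c v) = cmod c * norm v)"

definition star_normed_space ::
  "(complex \<Rightarrow> 'a::real_normed_vector \<Rightarrow> 'a) \<Rightarrow> ('a \<Rightarrow> 'a) \<Rightarrow> bool" where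
  "star_normed_space sm st \<longleftrightarrow>
     complex_normed_space sm \<and>
     (\<forall>x y. st (x + y) = st x + st y) \<and>
     (\<forall>c v. st (sm c v) = sm (cnj c) (st v)) \<and>
     (\<forall>v. st (st v) = v) \<and>
     (\<forall>v. norm (st v) = norm v)"

definition bounded_functional ::
  "(complex \<Rightarrow> 'a::real_normed_vector \<Rightarrow> 'a) \<Rightarrow> ('a \<Rightarrow> complex) \<Rightarrow> bool" where
  "bounded_functional sm f \<longleftrightarrow>
     (\<forall>x y. f (x + y) = f x + f y) \<and>
     (\<forall>c x. f (sm c x) = c * f x) \<and>
     (\<exists>K. \<forall>x. cmod (f x) \<le> K * norm x)"

definition dual_star :: "('a \<Rightarrow> 'a) \<Rightarrow> ('a \<Rightarrow> complex) \<Rightarrow> ('a \<Rightarrow> complex)" where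
  "dual_star st f = (\<lambda>v. cnj (f (st v)))"

definition herm_dual :: "(complex \<Rightarrow> 'a::real_normed_vector \<Rightarrow> 'a) \<Rightarrow> ('a \<Rightarrow> 'a) \<Rightarrow> ('a \<Rightarrow> complex) set" where
  "herm_dual sm st = {f. bounded_functional sm f \<and> dual_star st f = f}"

definition herm_dual_e ::
  "(complex \<Rightarrow> 'a::real_normed_vector \<Rightarrow> 'a) \<Rightarrow> ('a \<Rightarrow> 'a) \<Rightarrow> 'a \<Rightarrow> ('a \<Rightarrow> complex) set" where
  "herm_dual_e sm st e = {f \<in> herm_dual sm st. f e = 1}"

definition dual_ball ::
  "(complex \<Rightarrow> 'a::real_normed_vector \<Rightarrow> 'a) \<Rightarrow> real \<Rightarrow> ('a \<Rightarrow> complex) set" where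
  "dual_ball sm t = {f. bounded_functional sm f \<and> onorm f \<le> t}"

definition unital_star_normed_space ::
  "(complex \<Rightarrow> 'a::real_normed_vector \<Rightarrow> 'a) \<Rightarrow> ('a \<Rightarrow> 'a) \<Rightarrow> 'a \<Rightarrow> bool" where
  "unital_star_normed_space sm st e \<longleftrightarrow>
     star_normed_space sm st \<and> e \<noteq> 0 \<and> st e = e \<and>
     herm_dual_e sm st e \<inter> dual_ball sm 1 \<noteq> {}"

definition polar :: "('a \<Rightarrow> complex) set \<Rightarrow> 'a set" where
  "polar A = {v. \<forall>a\<in>A. cmod (a v) \<le> 1}"

end

theory Submission
  imports Defs
begin

(*
  Every functional in S_2 has norm at most 2, so ball V is contained in 2 S_2^o.  Conversely fix
  p in V_he* with norm at most 1.  For a hermitian contraction h, the functional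
  g = h - h(e) p is hermitian, vanishes at e and has norm at most 1 + |e|, so p +- g / (1 + |e|)
  lies in S_2; hence |g v| <= 1 + |e| and |h v| <= 1 + 2 |e| for v in S_2^o.  By the
  Hahn-Banach theorem for the norm (via Zorn's lemma) and complexification, |v| <= |h1 v| + |h2 v|
  for two hermitian contractions h1, h2, so S_2^o is contained in 2 (1 + 2 |e|) ball V.
*)

section \<open>Hahn-Banach theorem for the norm\<close>

text \<open>Partial real-linear functionals dominated by the norm, represented by their graphs so
  that extension is inclusion and chains have unions as upper bounds.\<close>

definition norm_dominated_graph :: "('a::real_normed_vector \<times> real) set \<Rightarrow> bool" where
  "norm_dominated_graph G \<longleftrightarrow>
     (\<forall>x a y b. (x, a) \<in> G \<longrightarrow> (y, b) \<in> G \<longrightarrow> (x + y, a + b) \<in> G) \<and>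
     (\<forall>x a t. (x, a) \<in> G \<longrightarrow> (t *\<^sub>R x, t * a) \<in> G) \<and>
     (\<forall>x a. (x, a) \<in> G \<longrightarrow> a \<le> norm x)"

lemma norm_dominated_graphD:
  assumes "norm_dominated_graph G"
  shows norm_dominated_graph_add: "(x, a) \<in> G \<Longrightarrow> (y, b) \<in> G \<Longrightarrow> (x + y, a + b) \<in> G"
    and norm_dominated_graph_scale: "(x, a) \<in> G \<Longrightarrow> (t *\<^sub>R x, t * a) \<in> G"
    and norm_dominated_graph_le: "(x, a) \<in> G \<Longrightarrow> a \<le> norm x"
  using assms unfolding norm_dominated_graph_def by blast+

lemma norm_dominated_graph_zero:
  assumes "norm_dominated_graph G" and "G \<noteq> {}"
  shows "(0, 0) \<in> G"
proof -
  obtain x a where "(x, a) \<in> G" using assms(2) by auto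
  from norm_dominated_graph_scale[OF assms(1) this, of 0] show ?thesis by simp
qed

lemma norm_dominated_graph_unique:
  assumes G: "norm_dominated_graph G" and "(x, a) \<in> G" and "(x, b) \<in> G"
  shows "a = b"
proof -
  have le: "a' - b' \<le> 0" if "(x, a') \<in> G" "(x, b') \<in> G" for a' b'
    using norm_dominated_graph_le[OF G norm_dominated_graph_add[OF G that(1)
          norm_dominated_graph_scale[OF G that(2), of "-1"]]]
    by simp
  from le[OF assms(2,3)] le[OF assms(3,2)] show ?thesis by linarith
qed

lemma norm_dominated_graph_chain_Union:
  assumes dom: "\<And>G. G \<in> C \<Longrightarrow> norm_dominated_graph G"
    and chain: "\<And>G H. G \<in> C \<Longrightarrow> H \<in> C \<Longrightarrow> G \<subseteq> H \<or> H \<subseteq> G"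
  shows "norm_dominated_graph (\<Union>C)"
  unfolding norm_dominated_graph_def
proof (intro conjI allI impI)
  fix x a y b assume "(x, a) \<in> \<Union>C" "(y, b) \<in> \<Union>C"
  then obtain K where "K \<in> C" "(x, a) \<in> K" "(y, b) \<in> K"
    using chain by blast
  then show "(x + y, a + b) \<in> \<Union>C"
    using dom norm_dominated_graph_add by blast
next
  fix x a t assume "(x, a) \<in> \<Union>C"
  then show "(t *\<^sub>R x, t * a) \<in> \<Union>C" using dom norm_dominated_graph_scale by blast
next
  fix x a assume "(x, a) \<in> \<Union>C"
  then show "a \<le> norm x" using dom norm_dominated_graph_le by blast
qed

lemma norm_dominated_graph_extension_value:
  assumes G: "norm_dominated_graph G" and "G \<noteq> {}"
  obtains c where "\<And>x a. (x, a) \<in> G \<Longrightarrow> a - c \<le> norm (x - y)"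
    and "\<And>x a. (x, a) \<in> G \<Longrightarrow> a + c \<le> norm (x + y)"
proof -
  define L where "L = {a - norm (x - y) | x a. (x, a) \<in> G}"
  have L_le: "l \<le> norm (x' + y) - a'" if "l \<in> L" "(x', a') \<in> G" for l x' a'
  proof -
    obtain x a where xa: "(x, a) \<in> G" and l: "l = a - norm (x - y)"
      using \<open>l \<in> L\<close> unfolding L_def by blast
    have "a + a' \<le> norm ((x - y) + (x' + y))"
      using norm_dominated_graph_le[OF G norm_dominated_graph_add[OF G xa that(2)]] by simp
    also have "\<dots> \<le> norm (x - y) + norm (x' + y)" by (rule norm_triangle_ineq)
    finally show ?thesis unfolding l by simp
  qed
  obtain x0 a0 where "(x0, a0) \<in> G" using \<open>G \<noteq> {}\<close> by auto
  then have "L \<noteq> {}" unfolding L_def by blast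
  have "bdd_above L" by (rule bdd_aboveI[of _ "norm (x0 + y) - a0"]) (rule L_le[OF _ \<open>(x0, a0) \<in> G\<close>])
  show ?thesis
  proof (rule that[of "Sup L"])
    fix x a assume "(x, a) \<in> G"
    then have "a - norm (x - y) \<in> L" unfolding L_def by blast
    from cSup_upper[OF this \<open>bdd_above L\<close>] show "a - Sup L \<le> norm (x - y)" by simp
    have "Sup L \<le> norm (x + y) - a"
      by (rule cSup_least[OF \<open>L \<noteq> {}\<close>]) (rule L_le[OF _ \<open>(x, a) \<in> G\<close>])
    then show "a + Sup L \<le> norm (x + y)" by simp
  qed
qed

lemma norm_dominated_graph_extend:
  assumes G: "norm_dominated_graph G"
    and lower: "\<And>x a. (x, a) \<in> G \<Longrightarrow> a - c \<le> norm (x - y)"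
    and upper: "\<And>x a. (x, a) \<in> G \<Longrightarrow> a + c \<le> norm (x + y)"
  shows "norm_dominated_graph {(x + t *\<^sub>R y, a + t * c) | x a t. (x, a) \<in> G}"
    (is "norm_dominated_graph ?H")
  unfolding norm_dominated_graph_def
proof (intro conjI allI impI)
  fix x a x' a'
  assume "(x, a) \<in> ?H" "(x', a') \<in> ?H"
  then obtain z b t z' b' t' where "x = z + t *\<^sub>R y" "a = b + t * c" "(z, b) \<in> G"
    and "x' = z' + t' *\<^sub>R y" "a' = b' + t' * c" "(z', b') \<in> G"
    by blast
  moreover have "(z + z', b + b') \<in> G" using calculation by (simp add: norm_dominated_graph_add[OF G])
  ultimately have "x + x' = (z + z') + (t + t') *\<^sub>R y \<and> a + a' = (b + b') + (t + t') * c
      \<and> (z + z', b + b') \<in> G"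
    by (simp add: algebra_simps)
  then show "(x + x', a + a') \<in> ?H" by blast
next
  fix x a s
  assume "(x, a) \<in> ?H"
  then obtain z b t where "x = z + t *\<^sub>R y" "a = b + t * c" "(z, b) \<in> G"
    by blast
  moreover have "(s *\<^sub>R z, s * b) \<in> G" using calculation by (simp add: norm_dominated_graph_scale[OF G])
  ultimately have "s *\<^sub>R x = s *\<^sub>R z + (s * t) *\<^sub>R y \<and> s * a = s * b + (s * t) * c
      \<and> (s *\<^sub>R z, s * b) \<in> G"
    by (simp add: algebra_simps)
  then show "(s *\<^sub>R x, s * a) \<in> ?H" by blast
next
  fix x a
  assume "(x, a) \<in> ?H"
  then obtain z b t where x: "x = z + t *\<^sub>R y" and a: "a = b + t * c" and zb: "(z, b) \<in> G"
    by blast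
  have scaled: "(z /\<^sub>R \<bar>t\<bar>, b / \<bar>t\<bar>) \<in> G"
    using norm_dominated_graph_scale[OF G zb, of "inverse \<bar>t\<bar>"] by (simp add: divide_inverse_commute)
  consider "t = 0" | "t > 0" | "t < 0" by linarith
  then show "a \<le> norm x"
  proof cases
    case 1
    then show ?thesis using x a norm_dominated_graph_le[OF G zb] by simp
  next
    case 2
    have "\<bar>t\<bar> * (b / \<bar>t\<bar> + c) \<le> \<bar>t\<bar> * norm (z /\<^sub>R \<bar>t\<bar> + y)"
      using upper[OF scaled] by (simp add: mult_left_mono)
    also have "\<dots> = norm (\<bar>t\<bar> *\<^sub>R (z /\<^sub>R \<bar>t\<bar> + y))" by simp
    also have "\<bar>t\<bar> *\<^sub>R (z /\<^sub>R \<bar>t\<bar> + y) = x" using 2 unfolding x by (simp add: scaleR_add_right)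
    finally show ?thesis using 2 unfolding a by (simp add: algebra_simps)
  next
    case 3
    have "\<bar>t\<bar> * (b / \<bar>t\<bar> - c) \<le> \<bar>t\<bar> * norm (z /\<^sub>R \<bar>t\<bar> - y)"
      using lower[OF scaled] by (simp add: mult_left_mono)
    also have "\<dots> = norm (\<bar>t\<bar> *\<^sub>R (z /\<^sub>R \<bar>t\<bar> - y))" by simp
    also have "\<bar>t\<bar> *\<^sub>R (z /\<^sub>R \<bar>t\<bar> - y) = x" using 3 unfolding x by (simp add: scaleR_diff_right)
    finally show ?thesis using 3 unfolding a by (simp add: algebra_simps)
  qed
qed

lemma norm_dominated_graph_maximal_total:
  assumes G: "norm_dominated_graph G" "G \<noteq> {}"
    and maximal: "\<And>H. norm_dominated_graph H \<Longrightarrow> G \<subseteq> H \<Longrightarrow> H = G"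
  obtains c where "(y, c) \<in> G"
proof -
  obtain c where "\<And>x a. (x, a) \<in> G \<Longrightarrow> a - c \<le> norm (x - y)"
    and "\<And>x a. (x, a) \<in> G \<Longrightarrow> a + c \<le> norm (x + y)"
    using norm_dominated_graph_extension_value[OF G, where y = y] by blast
  then have "norm_dominated_graph {(x + t *\<^sub>R y, a + t * c) | x a t. (x, a) \<in> G}"
    by (rule norm_dominated_graph_extend[OF G(1)])
  moreover have "G \<subseteq> {(x + t *\<^sub>R y, a + t * c) | x a t. (x, a) \<in> G}"
    by force
  ultimately have "{(x + t *\<^sub>R y, a + t * c) | x a t. (x, a) \<in> G} = G"
    by (rule maximal)
  moreover have "(y, c) \<in> {(x + t *\<^sub>R y, a + t * c) | x a t. (x, a) \<in> G}"
    using norm_dominated_graph_zero[OF G] by force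
  ultimately show thesis using that by blast
qed

lemma norm_dominated_graph_maximal_exists:
  fixes x0 :: "'a::real_normed_vector"
  obtains M where "norm_dominated_graph M" "(x0, norm x0) \<in> M"
    and "\<And>H. norm_dominated_graph H \<Longrightarrow> M \<subseteq> H \<Longrightarrow> H = M"
proof -
  define A where "A = {G. norm_dominated_graph G \<and> (x0, norm x0) \<in> G}"
  have "norm_dominated_graph {(0::'a, 0)}"
    unfolding norm_dominated_graph_def by simp
  then have "norm_dominated_graph {(x + t *\<^sub>R x0, a + t * norm x0) | x a t. (x, a) \<in> {(0, 0)}}"
    by (rule norm_dominated_graph_extend) simp_all
  moreover have "(x0, norm x0) \<in> {(x + t *\<^sub>R x0, a + t * norm x0) | x a t. (x, a) \<in> {(0, 0)}}"
    by force
  ultimately have "A \<noteq> {}" unfolding A_def by blast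
  moreover have "\<Union>C \<in> A" if "C \<noteq> {}" "subset.chain A C" for C
  proof -
    have "norm_dominated_graph (\<Union>C)"
      using that(2) unfolding subset.chain_def A_def
      by (intro norm_dominated_graph_chain_Union) blast+
    moreover have "(x0, norm x0) \<in> \<Union>C"
      using that unfolding subset.chain_def A_def by blast
    ultimately show ?thesis unfolding A_def by blast
  qed
  ultimately obtain M where "M \<in> A" and "\<And>X. X \<in> A \<Longrightarrow> M \<subseteq> X \<Longrightarrow> X = M"
    using subset_Zorn_nonempty[of A] by blast
  then show thesis
    using that unfolding A_def by blast
qed

lemma norming_functional_exists:
  fixes x0 :: "'a::real_normed_vector"
  obtains u :: "'a \<Rightarrow> real" where "linear u" "\<And>x. \<bar>u x\<bar> \<le> norm x" "u x0 = norm x0"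
proof -
  obtain M where M: "norm_dominated_graph M" and x0M: "(x0, norm x0) \<in> M"
    and M_max: "\<And>H. norm_dominated_graph H \<Longrightarrow> M \<subseteq> H \<Longrightarrow> H = M"
    using norm_dominated_graph_maximal_exists[of x0] by blast
  have "\<exists>!c. (y, c) \<in> M" for y
  proof -
    obtain c where "(y, c) \<in> M"
      using norm_dominated_graph_maximal_total[OF M _ M_max] x0M by blast
    then show ?thesis using norm_dominated_graph_unique[OF M] by blast
  qed
  define u where "u y = (THE c. (y, c) \<in> M)" for y
  have uM: "(y, u y) \<in> M" for y
    unfolding u_def by (rule theI') fact
  have u_eq: "u y = c" if "(y, c) \<in> M" for y c
    using norm_dominated_graph_unique[OF M uM that] .
  show thesis
  proof
    show "linear u"
      by (rule linearI)
        (simp_all add: u_eq norm_dominated_graph_add[OF M uM uM] norm_dominated_graph_scale[OF M uM])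
    show "\<bar>u x\<bar> \<le> norm x" for x
      using norm_dominated_graph_le[OF M uM, of x]
        norm_dominated_graph_le[OF M norm_dominated_graph_scale[OF M uM], of "-1" x]
      by simp
    show "u x0 = norm x0" using u_eq[OF x0M] .
  qed
qed

section \<open>Complex normed spaces and complexification\<close>

lemma cnj_sgn_mult_self: "cnj (sgn z) * z = complex_of_real (cmod z)"
proof (cases "z = 0")
  case False
  have "cnj (sgn z) * z = cnj z * z / complex_of_real (cmod z)"
    by (simp add: sgn_div_norm scaleR_conv_of_real divide_inverse)
  also have "cnj z * z = complex_of_real ((cmod z)\<^sup>2)"
    by (subst complex_norm_square) (rule mult.commute)
  finally show ?thesis using False by (simp add: power2_eq_square)
qed simp

text \<open>For real-linear w, the complex-linear functional with real part w.\<close>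

definition complexify :: "(complex \<Rightarrow> 'a \<Rightarrow> 'a) \<Rightarrow> ('a \<Rightarrow> real) \<Rightarrow> 'a \<Rightarrow> complex" where
  "complexify sm w x = complex_of_real (w x) - \<i> * complex_of_real (w (sm \<i> x))"

lemma Re_complexify [simp]: "Re (complexify sm w x) = w x"
  by (simp add: complexify_def)

context
  fixes sm :: "complex \<Rightarrow> 'a::real_normed_vector \<Rightarrow> 'a"
  assumes CN: "complex_normed_space sm"
begin

lemma sm_of_real: "sm (complex_of_real r) v = r *\<^sub>R v"
  and sm_add_right: "sm c (x + y) = sm c x + sm c y"
  and sm_add_left: "sm (c + d) v = sm c v + sm d v"
  and sm_sm: "sm c (sm d v) = sm (c * d) v"
  and norm_sm: "norm (sm c v) = cmod c * norm v"
  using CN unfolding complex_normed_space_def by blast+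

lemma sm_one: "sm 1 v = v"
  using sm_of_real[of 1] by simp

lemma sm_minus_left: "sm (- c) v = - sm c v"
proof -
  have "sm (- c) v + sm c v = 0"
    using sm_add_left[of "- c" c v] sm_of_real[of 0 v] by simp
  then show ?thesis by (simp add: eq_neg_iff_add_eq_0)
qed

lemma sm_scaleR_commute: "sm c (r *\<^sub>R x) = r *\<^sub>R sm c x"
  by (metis sm_of_real sm_sm mult.commute)

lemma sm_i_i: "sm \<i> (sm \<i> v) = - v"
  using sm_sm[of \<i> \<i> v] sm_of_real[of "-1" v] by simp

lemma sm_eq_Re_Im: "sm c x = Re c *\<^sub>R x + Im c *\<^sub>R sm \<i> x"
proof -
  have "sm c x = sm (complex_of_real (Re c) + \<i> * complex_of_real (Im c)) x"
    by (metis complex_eq)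
  also have "\<dots> = Re c *\<^sub>R x + Im c *\<^sub>R sm \<i> x"
    by (simp only: sm_add_left flip: sm_sm) (simp add: sm_of_real sm_scaleR_commute)
  finally show ?thesis .
qed

lemma linear_sm: "linear (sm c)"
  by (rule linearI) (simp_all add: sm_add_right sm_scaleR_commute)

lemma bounded_functional_bounded_linear:
  assumes "bounded_functional sm f"
  shows "bounded_linear f"
proof
  from assms obtain K where add: "\<And>x y. f (x + y) = f x + f y"
    and hom: "\<And>c x. f (sm c x) = c * f x" and K: "\<And>x. cmod (f x) \<le> K * norm x"
    unfolding bounded_functional_def by blast
  show "f (x + y) = f x + f y" for x y by (rule add)
  show "f (r *\<^sub>R x) = r *\<^sub>R f x" for r x
    using hom[of "complex_of_real r" x] by (simp add: sm_of_real scaleR_conv_of_real)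
  show "\<exists>K. \<forall>x. norm (f x) \<le> norm x * K"
    using K by (intro exI[of _ K] allI) (simp add: mult.commute)
qed

lemma dual_ball_norm_le:
  assumes "f \<in> dual_ball sm t"
  shows "cmod (f x) \<le> t * norm x"
proof -
  have "bounded_linear f"
    using assms bounded_functional_bounded_linear unfolding dual_ball_def by blast
  then have "cmod (f x) \<le> onorm f * norm x" by (rule onorm)
  also have "\<dots> \<le> t * norm x"
    using assms unfolding dual_ball_def by (simp add: mult_right_mono)
  finally show ?thesis .
qed

lemma dual_ballI:
  assumes "bounded_functional sm f" and "0 \<le> t" and "\<And>x. cmod (f x) \<le> t * norm x"
  shows "f \<in> dual_ball sm t"
  unfolding dual_ball_def using assms(1) onorm_bound[OF assms(2,3)] by blast

lemma complexify_add:
  assumes "linear w"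
  shows "complexify sm w (x + y) = complexify sm w x + complexify sm w y"
  by (simp add: complexify_def sm_add_right linear_add[OF assms] algebra_simps)

lemma complexify_sm:
  assumes w: "linear w"
  shows "complexify sm w (sm c x) = c * complexify sm w x"
proof -
  have "sm \<i> (sm c x) = Re c *\<^sub>R sm \<i> x - Im c *\<^sub>R x"
    by (simp add: sm_eq_Re_Im[of c x] sm_add_right sm_scaleR_commute sm_i_i)
  then have "w (sm \<i> (sm c x)) = Re c * w (sm \<i> x) - Im c * w x"
    by (simp add: linear_diff[OF w] linear_scale[OF w])
  moreover have "w (sm c x) = Re c * w x + Im c * w (sm \<i> x)"
    by (simp add: sm_eq_Re_Im[of c x] linear_add[OF w] linear_scale[OF w])
  ultimately show ?thesis
    by (simp add: complexify_def complex_eq_iff algebra_simps)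
qed

text \<open>Rotating x by the phase of the value reduces the bound for the modulus to the bound
  for the real part.\<close>
lemma norm_complexify_le:
  assumes w: "linear w" and w_le: "\<And>y. \<bar>w y\<bar> \<le> norm y"
  shows "cmod (complexify sm w x) \<le> norm x"
proof -
  define c where "c = cnj (sgn (complexify sm w x))"
  have "cmod (complexify sm w x) = Re (c * complexify sm w x)"
    unfolding c_def cnj_sgn_mult_self by simp
  also have "\<dots> = w (sm c x)"
    by (simp flip: complexify_sm[OF w])
  also have "\<dots> \<le> norm (sm c x)"
    using w_le abs_le_D1 by blast
  also have "\<dots> \<le> norm x"
    by (simp add: norm_sm c_def norm_sgn mult_left_le_one_le)
  finally show ?thesis .
qed

lemma bounded_functional_complexify:
  assumes "linear w" and "\<And>y. \<bar>w y\<bar> \<le> norm y"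
  shows "bounded_functional sm (complexify sm w)"
  unfolding bounded_functional_def
proof (intro conjI allI exI)
  show "complexify sm w (x + y) = complexify sm w x + complexify sm w y" for x y
    by (rule complexify_add) fact
  show "complexify sm w (sm c x) = c * complexify sm w x" for c x
    by (rule complexify_sm) fact
  show "cmod (complexify sm w x) \<le> 1 * norm x" for x
    using norm_complexify_le assms by simp
qed

end

section \<open>Hermitian functionals\<close>

definition herm_part :: "('a \<Rightarrow> 'a) \<Rightarrow> ('a \<Rightarrow> real) \<Rightarrow> 'a \<Rightarrow> real" where
  "herm_part st f x = (f x + f (st x)) / 2"

context
  fixes sm :: "complex \<Rightarrow> 'a::real_normed_vector \<Rightarrow> 'a" and st :: "'a \<Rightarrow> 'a"
  assumes S: "star_normed_space sm st"
begin

lemma star_complex_normed_space: "complex_normed_space sm"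
  using S unfolding star_normed_space_def by blast

lemma st_add: "st (x + y) = st x + st y"
  and st_sm: "st (sm c v) = sm (cnj c) (st v)"
  and st_st: "st (st v) = v"
  and norm_st: "norm (st v) = norm v"
  using S unfolding star_normed_space_def by blast+

lemma linear_st: "linear st"
proof (rule linearI)
  show "st (r *\<^sub>R x) = r *\<^sub>R st x" for r x
    using st_sm[of "complex_of_real r" x] by (simp add: sm_of_real[OF star_complex_normed_space])
qed (rule st_add)

lemma sm_i_st: "sm \<i> (st x) = - st (sm \<i> x)"
  using st_sm[of \<i> x] by (simp add: sm_minus_left[OF star_complex_normed_space])

lemma linear_herm_part: "linear f \<Longrightarrow> linear (herm_part st f)"
  unfolding herm_part_def
  by (rule linearI) (simp_all add: linear_add linear_scale linear_add[OF linear_st]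
      linear_scale[OF linear_st] add_divide_distrib algebra_simps)

lemma herm_part_st: "herm_part st f (st x) = herm_part st f x"
  by (simp add: herm_part_def st_st)

lemma abs_herm_part_le:
  assumes "\<And>y. \<bar>f y\<bar> \<le> norm y"
  shows "\<bar>herm_part st f x\<bar> \<le> norm x"
  using assms[of x] assms[of "st x"] by (simp add: herm_part_def norm_st)

lemma herm_dual_cnj:
  assumes "h \<in> herm_dual sm st"
  shows "h (st x) = cnj (h x)"
proof -
  have "dual_star st h = h" using assms unfolding herm_dual_def by blast
  from fun_cong[OF this, of x] have "cnj (h (st x)) = h x" by (simp add: dual_star_def)
  then have "cnj (cnj (h (st x))) = cnj (h x)" by (rule arg_cong)
  then show ?thesis by simp
qed

lemma complexify_herm_dual:
  assumes w: "linear w" and w_le: "\<And>y. \<bar>w y\<bar> \<le> norm y" and w_st: "\<And>x. w (st x) = w x"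
  shows "complexify sm w \<in> herm_dual sm st"
proof -
  have "w (sm \<i> (st x)) = - w (sm \<i> x)" for x
    by (simp add: sm_i_st linear_neg[OF w] w_st)
  then have "dual_star st (complexify sm w) = complexify sm w"
    by (simp add: dual_star_def complexify_def w_st fun_eq_iff complex_eq_iff)
  then show ?thesis
    unfolding herm_dual_def
    using bounded_functional_complexify[OF star_complex_normed_space w w_le] by blast
qed

lemma herm_dual_add:
  assumes "h \<in> herm_dual sm st"
  shows "h (x + y) = h x + h y"
  using assms unfolding herm_dual_def bounded_functional_def by blast

lemma herm_dual_sm:
  assumes "h \<in> herm_dual sm st"
  shows "h (sm c x) = c * h x"
  using assms unfolding herm_dual_def bounded_functional_def by blast

text \<open>The real norming functional u of v is the sum of its st-symmetric part and an
  antisymmetric part; precomposed with multiplication by i, the latter becomes st-symmetric too.\<close>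
lemma herm_dual_norming_pair:
  obtains h1 h2 where "h1 \<in> herm_dual sm st" "h2 \<in> herm_dual sm st"
    and "\<And>x. cmod (h1 x) \<le> norm x" "\<And>x. cmod (h2 x) \<le> norm x"
    and "norm v \<le> cmod (h1 v) + cmod (h2 v)"
proof -
  note CN = star_complex_normed_space
  obtain u where u: "linear u" "\<And>x. \<bar>u x\<bar> \<le> norm x" "u v = norm v"
    using norming_functional_exists[of v] by blast
  define ui where "ui = u \<circ> sm \<i>"
  have ui: "linear ui" "\<And>x. \<bar>ui x\<bar> \<le> norm x"
    unfolding ui_def using linear_compose[OF linear_sm[OF CN] u(1)] u(2)[of "sm \<i> x" for x]
    by (simp_all add: norm_sm[OF CN])
  define h1 h2 where "h1 = complexify sm (herm_part st u)" and "h2 = complexify sm (herm_part st ui)"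
  have herm: "h1 \<in> herm_dual sm st" "h2 \<in> herm_dual sm st"
    unfolding h1_def h2_def using u ui
    by (simp_all add: complexify_herm_dual linear_herm_part abs_herm_part_le herm_part_st)
  have bound: "cmod (h1 x) \<le> norm x" "cmod (h2 x) \<le> norm x" for x
    unfolding h1_def h2_def using u ui
    by (simp_all add: norm_complexify_le[OF CN] linear_herm_part abs_herm_part_le)
  have "sm \<i> (st (sm (- \<i>) v)) = - st v"
    by (simp add: st_sm sm_i_i[OF CN])
  moreover have "sm \<i> (sm (- \<i>) v) = v"
    by (simp add: sm_sm[OF CN] sm_one[OF CN])
  ultimately have "norm v = herm_part st u v + herm_part st ui (sm (- \<i>) v)"
    by (simp add: herm_part_def ui_def u(3) linear_neg[OF u(1)] field_simps)
  also have "\<dots> = Re (h1 v) + Re (h2 (sm (- \<i>) v))"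
    by (simp add: h1_def h2_def)
  also have "\<dots> \<le> cmod (h1 v) + cmod (h2 (sm (- \<i>) v))"
    by (intro add_mono complex_Re_le_cmod)
  also have "cmod (h2 (sm (- \<i>) v)) = cmod (h2 v)"
    by (simp add: herm_dual_sm[OF herm(2)] norm_mult)
  finally show thesis
    using that herm bound by blast
qed

lemma herm_dual_real_at_hermitian:
  assumes "h \<in> herm_dual sm st" and "st e = e"
  shows "complex_of_real (Re (h e)) = h e"
  using herm_dual_cnj[OF assms(1), of e] assms(2) by (metis Reals_cnj_iff Reals_def of_real_Re)

lemma herm_dual_add_scaled:
  assumes f: "f \<in> herm_dual sm st" and g: "g \<in> herm_dual sm st"
  shows "(\<lambda>x. f x + complex_of_real r * g x) \<in> herm_dual sm st"
proof -
  obtain Kf where Kf: "\<And>x. cmod (f x) \<le> Kf * norm x"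
    using f unfolding herm_dual_def bounded_functional_def by blast
  obtain Kg where Kg: "\<And>x. cmod (g x) \<le> Kg * norm x"
    using g unfolding herm_dual_def bounded_functional_def by blast
  have "cmod (f x + complex_of_real r * g x) \<le> (Kf + \<bar>r\<bar> * Kg) * norm x" for x
  proof -
    have "cmod (f x + complex_of_real r * g x) \<le> cmod (f x) + \<bar>r\<bar> * cmod (g x)"
      using norm_triangle_ineq[of "f x" "complex_of_real r * g x"] by (simp add: norm_mult)
    also have "\<dots> \<le> Kf * norm x + \<bar>r\<bar> * (Kg * norm x)"
      using Kf Kg by (intro add_mono mult_left_mono) auto
    finally show ?thesis by (simp add: algebra_simps)
  qed
  moreover have "f (a + b) + complex_of_real r * g (a + b) =
      (f a + complex_of_real r * g a) + (f b + complex_of_real r * g b)" for a b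
    by (simp add: herm_dual_add[OF f] herm_dual_add[OF g] algebra_simps)
  moreover have "f (sm c x) + complex_of_real r * g (sm c x) = c * (f x + complex_of_real r * g x)"
    for c x by (simp add: herm_dual_sm[OF f] herm_dual_sm[OF g] algebra_simps)
  moreover have "dual_star st (\<lambda>x. f x + complex_of_real r * g x) = (\<lambda>x. f x + complex_of_real r * g x)"
    by (simp add: dual_star_def herm_dual_cnj[OF f] herm_dual_cnj[OF g] st_st fun_eq_iff)
  ultimately show ?thesis
    unfolding herm_dual_def bounded_functional_def by blast
qed

end

section \<open>The polar of S_2\<close>

lemma polar_segment_bound:
  assumes v: "v \<in> polar A" and "t > 0"
    and "(\<lambda>x. p x + complex_of_real t * g x) \<in> A"
    and "(\<lambda>x. p x + complex_of_real (- t) * g x) \<in> A"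
  shows "cmod (g v) \<le> 1 / t"
proof -
  have polar_le: "cmod (a v) \<le> 1" if "a \<in> A" for a
    using v that unfolding polar_def by blast
  have "2 * t * cmod (g v) = cmod ((p v + complex_of_real t * g v) - (p v + complex_of_real (- t) * g v))"
    using \<open>t > 0\<close> by (simp add: norm_mult algebra_simps)
  also have "\<dots> \<le> cmod (p v + complex_of_real t * g v) + cmod (p v + complex_of_real (- t) * g v)"
    by (rule norm_triangle_ineq4)
  also have "\<dots> \<le> 1 + 1"
    using polar_le[OF assms(3)] polar_le[OF assms(4)] by (intro add_mono) simp_all
  finally show ?thesis
    using \<open>t > 0\<close> by (simp add: field_simps)
qed

context
  fixes sm :: "complex \<Rightarrow> 'a::real_normed_vector \<Rightarrow> 'a" and st :: "'a \<Rightarrow> 'a"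
  assumes S: "star_normed_space sm st"
begin

lemma herm_dual_e_dual_ball_perturb:
  assumes p: "p \<in> herm_dual_e sm st e \<inter> dual_ball sm 1"
    and g: "g \<in> herm_dual sm st" "g e = 0" and g_le: "\<And>x. cmod (g x) \<le> K * norm x"
    and s: "\<bar>s\<bar> * K \<le> 1"
  shows "(\<lambda>x. p x + complex_of_real s * g x) \<in> herm_dual_e sm st e \<inter> dual_ball sm 2"
proof -
  note CN = star_complex_normed_space[OF S]
  have p_herm: "p \<in> herm_dual sm st" and "p e = 1"
    using p unfolding herm_dual_e_def by blast+
  have herm: "(\<lambda>x. p x + complex_of_real s * g x) \<in> herm_dual sm st"
    by (rule herm_dual_add_scaled[OF S p_herm g(1)])
  have "cmod (p x + complex_of_real s * g x) \<le> 2 * norm x" for x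
  proof -
    have "cmod (p x + complex_of_real s * g x) \<le> cmod (p x) + \<bar>s\<bar> * cmod (g x)"
      using norm_triangle_ineq[of "p x" "complex_of_real s * g x"] by (simp add: norm_mult)
    also have "\<dots> \<le> norm x + \<bar>s\<bar> * (K * norm x)"
      using dual_ball_norm_le[OF CN, of p 1 x] p g_le[of x]
      by (intro add_mono mult_left_mono) auto
    also have "\<bar>s\<bar> * (K * norm x) \<le> norm x"
      using mult_right_mono[OF s norm_ge_zero[of x]] by (simp add: mult.assoc)
    finally show ?thesis by simp
  qed
  then have "(\<lambda>x. p x + complex_of_real s * g x) \<in> dual_ball sm 2"
    using herm by (intro dual_ballI[OF CN]) (auto simp: herm_dual_def)
  with herm show ?thesis
    using \<open>p e = 1\<close> g(2) unfolding herm_dual_e_def by simp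
qed

text \<open>g = h - Re (h e) p vanishes at e, so p + s g stays in S_2 for |s| <= 1 / (1 + |e|);
  the polar therefore bounds g at v, and hence h.\<close>
lemma herm_dual_bounded_on_polar:
  assumes "st e = e" and p: "p \<in> herm_dual_e sm st e \<inter> dual_ball sm 1"
    and h: "h \<in> herm_dual sm st" and h_le: "\<And>x. cmod (h x) \<le> norm x"
    and v: "v \<in> polar (herm_dual_e sm st e \<inter> dual_ball sm 2)"
  shows "cmod (h v) \<le> 1 + 2 * norm e"
proof -
  note CN = star_complex_normed_space[OF S]
  define a where "a = Re (h e)"
  have a_le: "\<bar>a\<bar> \<le> norm e"
    using abs_Re_le_cmod[of "h e"] h_le[of e] unfolding a_def by linarith
  have p_herm: "p \<in> herm_dual sm st" and "p e = 1"
    using p unfolding herm_dual_e_def by blast+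
  have p_le: "cmod (p x) \<le> norm x" for x
    using dual_ball_norm_le[OF CN, of p 1 x] p by simp
  define g where "g x = h x + complex_of_real (- a) * p x" for x
  have g_herm: "g \<in> herm_dual sm st"
    unfolding g_def by (rule herm_dual_add_scaled[OF S h p_herm])
  have "g e = 0"
    using herm_dual_real_at_hermitian[OF S h \<open>st e = e\<close>] \<open>p e = 1\<close> unfolding g_def a_def by simp
  have g_le: "cmod (g x) \<le> (1 + norm e) * norm x" for x
  proof -
    have "cmod (g x) \<le> cmod (h x) + \<bar>a\<bar> * cmod (p x)"
      using norm_triangle_ineq[of "h x" "complex_of_real (- a) * p x"] by (simp add: g_def norm_mult)
    also have "\<dots> \<le> norm x + norm e * norm x"
      using h_le[of x] p_le[of x] a_le by (intro add_mono mult_mono) auto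
    finally show ?thesis by (simp add: algebra_simps)
  qed
  define t where "t = 1 / (1 + norm e)"
  have "t > 0" unfolding t_def by (simp add: add_pos_nonneg)
  have segment: "(\<lambda>x. p x + complex_of_real s * g x) \<in> herm_dual_e sm st e \<inter> dual_ball sm 2"
    if "\<bar>s\<bar> = t" for s
    using that by (intro herm_dual_e_dual_ball_perturb[OF p g_herm \<open>g e = 0\<close> g_le])
      (simp add: t_def add_pos_nonneg)
  have g_v: "cmod (g v) \<le> 1 + norm e"
    using polar_segment_bound[OF v \<open>t > 0\<close> segment segment] \<open>t > 0\<close> by (simp add: t_def)
  have "p \<in> herm_dual_e sm st e \<inter> dual_ball sm 2"
    using p unfolding dual_ball_def by auto
  then have p_v: "cmod (p v) \<le> 1"
    using v unfolding polar_def by blast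
  have "h v = g v + complex_of_real a * p v"
    unfolding g_def by simp
  then have "cmod (h v) \<le> cmod (g v) + \<bar>a\<bar> * cmod (p v)"
    using norm_triangle_ineq[of "g v" "complex_of_real a * p v"] by (simp add: norm_mult)
  also have "\<dots> \<le> (1 + norm e) + norm e * 1"
    using g_v p_v a_le by (intro add_mono mult_mono) auto
  finally show ?thesis by simp
qed

end

lemma cball_subset_polar_dual_ball:
  fixes sm :: "complex \<Rightarrow> 'a::real_normed_vector \<Rightarrow> 'a"
  assumes "complex_normed_space sm" and "t > 0"
  shows "cball 0 (1 / t) \<subseteq> polar (A \<inter> dual_ball sm t)"
proof (intro subsetI, unfold polar_def, intro CollectI ballI)
  fix v :: 'a and f assume "v \<in> cball 0 (1 / t)" and "f \<in> A \<inter> dual_ball sm t"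
  then have "cmod (f v) \<le> t * norm v"
    using dual_ball_norm_le[OF assms(1)] by blast
  also have "\<dots> \<le> t * (1 / t)"
    using \<open>v \<in> cball 0 (1 / t)\<close> \<open>t > 0\<close> by (intro mult_left_mono) auto
  finally show "cmod (f v) \<le> 1"
    using \<open>t > 0\<close> by simp
qed

lemma polar_herm_dual_e_norm_le:
  assumes U: "unital_star_normed_space sm st e"
    and v: "v \<in> polar (herm_dual_e sm st e \<inter> dual_ball sm 2)"
  shows "norm v \<le> 2 * (1 + 2 * norm e)"
proof -
  have S: "star_normed_space sm st" and "st e = e"
    and "herm_dual_e sm st e \<inter> dual_ball sm 1 \<noteq> {}"
    using U unfolding unital_star_normed_space_def by blast+
  then obtain p where p: "p \<in> herm_dual_e sm st e \<inter> dual_ball sm 1"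
    by blast
  obtain h1 h2 where h1: "h1 \<in> herm_dual sm st" "\<And>x. cmod (h1 x) \<le> norm x"
    and h2: "h2 \<in> herm_dual sm st" "\<And>x. cmod (h2 x) \<le> norm x"
    and "norm v \<le> cmod (h1 v) + cmod (h2 v)"
    using herm_dual_norming_pair[OF S] by metis
  note bound = herm_dual_bounded_on_polar[OF S \<open>st e = e\<close> p _ _ v]
  have "norm v \<le> cmod (h1 v) + cmod (h2 v)" by fact
  also have "\<dots> \<le> (1 + 2 * norm e) + (1 + 2 * norm e)"
    using bound[OF h1] bound[OF h2] by (rule add_mono)
  finally show ?thesis by simp
qed

theorem lemma4p2:
  fixes sm :: "complex \<Rightarrow> 'a::real_normed_vector \<Rightarrow> 'a"
    and st :: "'a \<Rightarrow> 'a" and e :: 'a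
  assumes "unital_star_normed_space sm st e"
  shows "\<exists>r R. r > 0 \<and> R > 0 \<and>
    (\<lambda>v. r *\<^sub>R v) ` polar (herm_dual_e sm st e \<inter> dual_ball sm 2) \<subseteq> cball 0 1 \<and>
    cball 0 1 \<subseteq> (\<lambda>v. R *\<^sub>R v) ` polar (herm_dual_e sm st e \<inter> dual_ball sm 2)"
proof -
  let ?P = "polar (herm_dual_e sm st e \<inter> dual_ball sm 2)"
  define K where "K = 2 * (1 + 2 * norm e)"
  have "K > 0" unfolding K_def by (simp add: add_pos_nonneg)
  have "?P \<subseteq> cball 0 K"
    using polar_herm_dual_e_norm_le[OF assms] unfolding K_def by auto
  then have "(\<lambda>v. (1 / K) *\<^sub>R v) ` ?P \<subseteq> cball 0 1"
    using image_mono cball_scale[of "1 / K" 0 K] \<open>K > 0\<close> by fastforce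
  moreover have "complex_normed_space sm"
    using assms unfolding unital_star_normed_space_def star_normed_space_def by blast
  then have "cball 0 (1 / 2) \<subseteq> ?P"
    using cball_subset_polar_dual_ball[of sm 2] by simp
  then have "cball 0 1 \<subseteq> (\<lambda>v. 2 *\<^sub>R v) ` ?P"
    using image_mono cball_scale[of 2 0 "1 / 2"] by fastforce
  ultimately show ?thesis
    using \<open>K > 0\<close> by (intro exI[of _ "1 / K"] exI[of _ 2]) simp
qed

end
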